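(* Let $\alpha(t)=\sum_na_nt^n$ be an adelic series on a number field $\mathbb{K}$ with $a_0=0$ and $a_1\neq0$. Then there exists an adelic series $\beta$ such that $\beta\circ\alpha(t)=t$.
   Context: For a number field $\mathbb{K}$ and a finite set $S$ of places containing the Archimedean ones, $\mathcal{O}_{\mathbb{K},S}$ is the ring of elements of $v$-norm $\le1$ for all $v\notin S$. A formal power series $\sum_na_nt^n$ is adelic on $\mathbb{K}$ if its coefficients lie in $\mathcal{O}_{\mathbb{K},S}$ for some such finite $S$ and, for every place $v$ of $\mathbb{K}$, its radius of convergence $\limsup_n|a_n|_v^{-1/n}$ is positive. *)

theory Defs
  imports "HOL-Computational_Algebra.Formal_Power_Series" "HOL-Library.Extended_Real"
    "HOL-Library.Liminf_Limsup"
begin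

definition number_field :: "'a::field_char_0 itself \<Rightarrow> bool" where
  "number_field _ \<longleftrightarrow>
     (\<exists>B::'a set. finite B \<and> (\<forall>x. \<exists>c. x = (\<Sum>b\<in>B. of_rat (c b) * b)))"

definition absval :: "('a::field \<Rightarrow> real) \<Rightarrow> bool" where
  "absval v \<longleftrightarrow> (\<forall>x. v x \<ge> 0) \<and> (\<forall>x. v x = 0 \<longleftrightarrow> x = 0) \<and>
     (\<forall>x y. v (x * y) = v x * v y) \<and> (\<forall>x y. v (x + y) \<le> v x + v y)"

definition nontrivial_absval :: "('a::field \<Rightarrow> real) \<Rightarrow> bool" where
  "nontrivial_absval v \<longleftrightarrow> absval v \<and> (\<exists>x. x \<noteq> 0 \<and> v x \<noteq> 1)"

definition archimedean_absval :: "('a::field \<Rightarrow> real) \<Rightarrow> bool" where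
  "archimedean_absval v \<longleftrightarrow> \<not> (\<forall>x y. v (x + y) \<le> max (v x) (v y))"

definition equiv_absval :: "('a::field \<Rightarrow> real) \<Rightarrow> ('a \<Rightarrow> real) \<Rightarrow> bool" where
  "equiv_absval v w \<longleftrightarrow> (\<exists>c>0. \<forall>x. w x = v x powr c)"

text \<open>Coefficients lie in \<open>O_{K,S}\<close> for some finite set \<open>S\<close> of places containing the
  Archimedean ones; places are represented by absolute values in \<open>S\<close> up to equivalence.\<close>
definition S_integral_coeffs :: "('a::field fps) \<Rightarrow> bool" where
  "S_integral_coeffs f \<longleftrightarrow>
     (\<exists>S. finite S \<and> (\<forall>w\<in>S. nontrivial_absval w) \<and>
        (\<forall>v. nontrivial_absval v \<and> archimedean_absval v \<longrightarrow> (\<exists>w\<in>S. equiv_absval w v)) \<and>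
        (\<forall>v. nontrivial_absval v \<and> \<not> (\<exists>w\<in>S. equiv_absval w v) \<longrightarrow>
              (\<forall>n. v (fps_nth f n) \<le> 1)))"

definition fps_radius_at :: "('a::field \<Rightarrow> real) \<Rightarrow> 'a fps \<Rightarrow> ereal" where
  "fps_radius_at v f = inverse (limsup (\<lambda>n. ereal (root n (v (fps_nth f n)))))"

definition adelic :: "'a::field fps \<Rightarrow> bool" where
  "adelic f \<longleftrightarrow> S_integral_coeffs f \<and>
     (\<forall>v. nontrivial_absval v \<longrightarrow> fps_radius_at v f > 0)"

end

theory Submission
  imports Defs "HOL-Computational_Algebra.Primes"
begin

text \<open>The inverse is \<open>\<beta> = fps_inv \<alpha>\<close>, whose coefficients satisfy
  \<open>b_n = - (\<Sum>i=2..n. a_i (\<beta>^i)_n) / a_1\<close>. At any place the \<open>a_n\<close> grow at most geometrically, and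
  this recursion propagates a bound \<open>L^n / (K n^2)\<close> to the \<open>b_n\<close>; the factor \<open>1/n^2\<close> keeps the
  convolution sums bounded even at Archimedean places, so \<open>\<beta>\<close> has positive radius everywhere.
  At a non-Archimedean place where the \<open>a_n\<close> and \<open>1/a_1\<close> are integral, the ultrametric
  inequality keeps the \<open>b_n\<close> integral. Finally, \<open>1/a_1\<close> is integral outside finitely many places:
  it satisfies a monic rational relation, so its poles lie above the primes dividing the
  denominators of that relation, and above each prime \<open>p\<close> there are at most as many
  inequivalent places as the degree of the field, because near-idempotents for distinct places
  are linearly independent over \<open>\<rat>\<close> (all places above \<open>p\<close> order the rationals in the same way).\<close>

unbundle fps_syntax

context
  fixes v :: "'a::field \<Rightarrow> real"
  assumes v: "absval v"
begin

lemma absval_nonneg: "v x \<ge> 0"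
  using v unfolding absval_def by auto

lemma absval_eq_0_iff [simp]: "v x = 0 \<longleftrightarrow> x = 0"
  using v unfolding absval_def by auto

lemma absval_zero [simp]: "v 0 = 0"
  by simp

lemma absval_pos: "x \<noteq> 0 \<Longrightarrow> v x > 0"
  using absval_nonneg[of x] by (simp add: less_le)

lemma absval_mult: "v (x * y) = v x * v y"
  using v unfolding absval_def by auto

lemma absval_triangle: "v (x + y) \<le> v x + v y"
  using v unfolding absval_def by auto

lemma absval_one [simp]: "v 1 = 1"
  using absval_mult[of 1 1] by simp

lemma absval_minus_one [simp]: "v (-1) = 1"
proof -
  have "(v (-1) - 1) * (v (-1) + 1) = 0"
    using absval_mult[of "-1" "-1"] by (simp add: algebra_simps)
  with absval_nonneg[of "-1"] show ?thesis by auto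
qed

lemma absval_uminus [simp]: "v (- x) = v x"
  using absval_mult[of "-1" x] by simp

lemma absval_inverse: "v (inverse x) = inverse (v x)"
proof (cases "x = 0")
  case False
  then have "v x * v (inverse x) = 1" using absval_mult[of x "inverse x"] by simp
  then show ?thesis by (metis inverse_unique)
qed simp

lemma absval_divide: "v (x / y) = v x / v y"
  by (simp add: divide_inverse absval_mult absval_inverse)

lemma absval_power: "v (x ^ n) = v x ^ n"
  by (induction n) (simp_all add: absval_mult)

lemma absval_diff_le: "v (x - y) \<le> v x + v y"
  using absval_triangle[of x "-y"] by simp

lemma absval_reverse_triangle: "v x - v y \<le> v (x - y)"
  using absval_triangle[of "x - y" y] by simp

lemma absval_reverse_triangle_add: "v x - v y \<le> v (x + y)"
  using absval_triangle[of "x + y" "-y"] by simp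

lemma absval_sum_le: "v (sum f A) \<le> (\<Sum>i\<in>A. v (f i))"
  by (induction A rule: infinite_finite_induct) (auto intro: order_trans[OF absval_triangle])

end

context
  fixes v :: "'a::field \<Rightarrow> real"
  assumes v: "absval v" and ultra: "\<not> archimedean_absval v"
begin

lemma absval_ultrametric: "v (x + y) \<le> max (v x) (v y)"
  using ultra unfolding archimedean_absval_def by auto

lemma absval_ultrametric_sum_le:
  "(\<And>i. i \<in> A \<Longrightarrow> v (f i) \<le> M) \<Longrightarrow> 0 \<le> M \<Longrightarrow> v (sum f A) \<le> M"
proof (induction A rule: infinite_finite_induct)
  case (insert x F)
  then have "v (f x) \<le> M" "v (sum f F) \<le> M" by auto
  then show ?case using absval_ultrametric[of "f x" "sum f F"] insert.hyps by simp
qed (auto simp: v)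

lemma absval_ultrametric_sum_less:
  "(\<And>i. i \<in> A \<Longrightarrow> v (f i) < M) \<Longrightarrow> 0 < M \<Longrightarrow> v (sum f A) < M"
proof (induction A rule: infinite_finite_induct)
  case (insert x F)
  then have "v (f x) < M" "v (sum f F) < M" by auto
  then show ?case using absval_ultrametric[of "f x" "sum f F"] insert.hyps by simp
qed (auto simp: v)

lemma absval_of_nat_le_1: "v (of_nat n) \<le> 1"
  using absval_ultrametric_sum_le[of "{..<n}" "\<lambda>_. 1" 1] by (simp add: v)

lemma absval_of_int_le_1: "v (of_int n) \<le> 1"
proof (cases "n \<ge> 0")
  case True
  then show ?thesis using absval_of_nat_le_1[of "nat n"] by simp
next
  case False
  then show ?thesis using absval_of_nat_le_1[of "nat (- n)"] absval_uminus[OF v, of "of_int n"] by simp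
qed

end

section \<open>Radius of convergence of the compositional inverse\<close>

lemma fps_radius_at_pos_iff_geometric_bound:
  assumes "\<And>x. v x \<ge> 0"
  shows "fps_radius_at v f > 0 \<longleftrightarrow> (\<exists>R\<ge>1. \<forall>n\<ge>1. v (f $ n) \<le> R ^ n)"
proof
  define l where "l = limsup (\<lambda>n. ereal (root n (v (f $ n))))"
  assume "fps_radius_at v f > 0"
  then have "l \<noteq> \<infinity>" unfolding fps_radius_at_def l_def[symmetric] by auto
  then obtain L where L: "l < ereal L"
    by (cases l) (auto intro: less_add_one)
  then have "eventually (\<lambda>n. ereal (root n (v (f $ n))) < ereal L) sequentially"
    unfolding l_def by (rule Limsup_lessD)
  then obtain N where N: "\<And>n. n \<ge> N \<Longrightarrow> root n (v (f $ n)) < L"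
    unfolding eventually_sequentially by auto
  define R where "R = max 1 (max L (Max ((\<lambda>k. v (f $ k)) ` {..N})))"
  have "R \<ge> 1" unfolding R_def by simp
  moreover have "v (f $ n) \<le> R ^ n" if "n \<ge> 1" for n
  proof (cases "n \<ge> N")
    case True
    have "v (f $ n) = root n (v (f $ n)) ^ n" using that assms[of "f $ n"] by simp
    also have "\<dots> \<le> R ^ n"
      by (rule power_mono) (use N[OF True] real_root_ge_zero[OF assms] in \<open>auto simp: R_def\<close>)
    finally show ?thesis .
  next
    case False
    have "v (f $ n) \<le> Max ((\<lambda>k. v (f $ k)) ` {..N})" using False by (intro Max_ge) auto
    also have "\<dots> \<le> R" unfolding R_def by (intro max.coboundedI2 max.cobounded2)
    also have "R \<le> R ^ n" using \<open>R \<ge> 1\<close> that by (simp add: power_increasing[of 1 n, simplified])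
    finally show ?thesis .
  qed
  ultimately show "\<exists>R\<ge>1. \<forall>n\<ge>1. v (f $ n) \<le> R ^ n" by blast
next
  assume "\<exists>R\<ge>1. \<forall>n\<ge>1. v (f $ n) \<le> R ^ n"
  then obtain R where R: "R \<ge> 1" "\<And>n. n \<ge> 1 \<Longrightarrow> v (f $ n) \<le> R ^ n" by blast
  have "ereal (root n (v (f $ n))) \<le> ereal R" for n
  proof (cases "n = 0")
    case False
    then have "root n (v (f $ n)) \<le> root n (R ^ n)" using R(2)[of n] by simp
    then show ?thesis using False R(1) by (simp add: real_root_power_cancel)
  qed (use R in simp)
  then have "limsup (\<lambda>n. ereal (root n (v (f $ n)))) \<le> ereal R"
    by (intro Limsup_bounded) auto
  moreover have "ereal 0 \<le> limsup (\<lambda>n. ereal (root n (v (f $ n))))"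
    using assms by (intro le_Limsup) (simp_all add: real_root_ge_zero)
  ultimately show "fps_radius_at v f > 0"
    unfolding fps_radius_at_def by (cases "limsup (\<lambda>n. ereal (root n (v (f $ n))))") auto
qed

lemma sum_inverse_squares_le_2: "(\<Sum>i=1..m. 1 / (real i)^2) \<le> 2"
proof -
  have "(\<Sum>i=1..m. 1 / (real i)^2) \<le> 2 - 1 / real (max 1 m)"
  proof (induction m)
    case (Suc m)
    show ?case
    proof (cases "m = 0")
      case False
      have "1 / (real (Suc m))^2 \<le> 1 / (real m * real (Suc m))"
        unfolding power2_eq_square using False by (intro divide_left_mono mult_right_mono) auto
      also have "\<dots> = 1 / real m - 1 / real (Suc m)"
        using False by (simp add: field_simps)
      finally show ?thesis using Suc False by simp
    qed simp
  qed simp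
  also have "\<dots> \<le> 2" by simp
  finally show ?thesis .
qed
lemma sum_inverse_squares_convolution_le:
  "(\<Sum>i=1..m-1. 1 / ((real i)^2 * (real (m - i))^2)) \<le> 8 / (real m)^2"
proof -
  have term_le: "1 / ((real i)^2 * (real (m - i))^2)
      \<le> 2 / (real m)^2 * (1 / (real i)^2 + 1 / (real (m - i))^2)" if "i \<in> {1..m-1}" for i
  proof -
    define a b where "a = real i" and "b = real (m - i)"
    have ab: "a > 0" "b > 0" "a + b = real m" using that unfolding a_def b_def by auto
    have "(1/a + 1/b)^2 \<le> 2 * (1/a^2 + 1/b^2)"
      using zero_le_square[of "1/a - 1/b"] by (simp add: power2_eq_square algebra_simps)
    then have "(1/a + 1/b)^2 / (a + b)^2 \<le> 2 * (1/a^2 + 1/b^2) / (a + b)^2"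
      by (rule divide_right_mono) simp
    moreover have "1 / (a^2 * b^2) = (1/a + 1/b)^2 / (a + b)^2"
      using ab by (simp add: field_simps power2_eq_square)
    ultimately show ?thesis using ab unfolding a_def b_def by (simp add: mult.commute)
  qed
  have reflect: "(\<Sum>i=1..m-1. 1 / (real (m - i))^2) = (\<Sum>i=1..m-1. 1 / (real i)^2)"
    by (rule sum.reindex_bij_witness[of _ "\<lambda>i. m - i" "\<lambda>i. m - i"]) auto
  have "(\<Sum>i=1..m-1. 1 / ((real i)^2 * (real (m - i))^2))
      \<le> (\<Sum>i=1..m-1. 2 / (real m)^2 * (1 / (real i)^2 + 1 / (real (m - i))^2))"
    by (rule sum_mono) (rule term_le)
  also have "\<dots> = 2 / (real m)^2 * (2 * (\<Sum>i=1..m-1. 1 / (real i)^2))"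
    by (simp only: sum.distrib sum_distrib_left[symmetric] reflect mult_2)
  also have "\<dots> \<le> 2 / (real m)^2 * (2 * 2)"
    using sum_inverse_squares_le_2[of "m - 1"] by (intro mult_left_mono) auto
  finally show ?thesis by simp
qed
lemma geometric_sum_le_twice:
  fixes q :: real
  assumes "0 \<le> q" "q \<le> 1/2"
  shows "(\<Sum>i=2..n. q^(i-1)) \<le> 2 * q"
proof -
  have "q^(i-1) \<le> 4 * q * (1/2)^i" if "i \<in> {2..n}" for i
  proof -
    define k where "k = i - 2"
    have k: "i = k + 2" using that unfolding k_def by auto
    have "q^(i-1) = q * q^k" by (simp add: k)
    also have "\<dots> \<le> q * (1/2)^k" using assms by (intro mult_left_mono power_mono) auto
    also have "\<dots> = 4 * q * (1/2)^i" by (simp add: k power_add)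
    finally show ?thesis .
  qed
  then have "(\<Sum>i=2..n. q^(i-1)) \<le> (\<Sum>i=2..n. 4 * q * (1/2::real)^i)"
    by (rule sum_mono)
  also have "\<dots> = 4 * q * (\<Sum>i=2..n. (1/2::real)^i)"
    by (simp add: sum_distrib_left)
  also have "(\<Sum>i=2..n. (1/2::real)^i) \<le> 1/2"
    using sum_gp[of "1/2::real" 2 n] by (simp add: divide_simps)
  then have "4 * q * (\<Sum>i=2..n. (1/2::real)^i) \<le> 4 * q * (1/2)"
    using assms by (intro mult_left_mono) auto
  finally show ?thesis by simp
qed

lemma fps_power_nth_quadratic_decay:
  fixes f :: "'a::field fps"
  assumes v: "absval v" and f0: "f $ 0 = 0"
    and f_le: "\<And>k. 1 \<le> k \<Longrightarrow> k < n \<Longrightarrow> v (f $ k) \<le> L^k / (K * (real k)^2)"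
    and K: "K > 0" and L: "L \<ge> 0"
  shows "1 \<le> j \<Longrightarrow> 1 \<le> m \<Longrightarrow> m \<le> n \<Longrightarrow> 2 \<le> j \<or> m < n \<Longrightarrow>
     v ((f ^ j) $ m) \<le> 8^(j-1) * L^m / (K^j * (real m)^2)"
proof (induction j arbitrary: m rule: nat_induct_at_least)
  case base
  then show ?case using f_le[of m] by simp
next
  case (Suc j)
  define C where "C = 8^(j-1) * L^m / K^(Suc j)"
  have C: "C \<ge> 0" unfolding C_def using K L by simp
  have term_le: "v (f $ i * (f ^ j) $ (m - i)) \<le> C * (1 / ((real i)^2 * (real (m - i))^2))"
    if i: "i \<in> {1..m-1}" for i
  proof -
    have "v (f $ i) \<le> L^i / (K * (real i)^2)" using f_le i Suc.prems by auto
    moreover have "v ((f ^ j) $ (m - i)) \<le> 8^(j-1) * L^(m-i) / (K^j * (real (m - i))^2)"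
    proof -
      have "1 \<le> m - i" "m - i \<le> n" "m - i < n" using i Suc.prems by auto
      then show ?thesis using Suc.IH[of "m - i"] by blast
    qed
    ultimately have "v (f $ i * (f ^ j) $ (m - i))
        \<le> (L^i / (K * (real i)^2)) * (8^(j-1) * L^(m-i) / (K^j * (real (m - i))^2))"
      unfolding absval_mult[OF v] by (intro mult_mono) (use absval_nonneg[OF v] K L in auto)
    also have "\<dots> = C * (1 / ((real i)^2 * (real (m - i))^2))"
    proof -
      have "L^i * L^(m-i) = L^m" using i by (auto simp flip: power_add)
      then show ?thesis unfolding C_def by (simp add: field_simps)
    qed
    finally show ?thesis .
  qed
  have ends: "f $ i * (f ^ j) $ (m - i) = 0" if "i \<in> {0..m} - {1..m-1}" for i
    using that f0 Suc.hyps by (cases "i = 0") (auto simp: fps_power_zeroth)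
  have "v ((f ^ Suc j) $ m) = v (\<Sum>i=1..m-1. f $ i * (f ^ j) $ (m - i))"
    unfolding power_Suc fps_mult_nth
    by (subst sum.mono_neutral_right[of "{0..m}" "{1..m-1}"]) (use ends in auto)
  also have "\<dots> \<le> (\<Sum>i=1..m-1. v (f $ i * (f ^ j) $ (m - i)))"
    by (rule absval_sum_le[OF v])
  also have "\<dots> \<le> C * (\<Sum>i=1..m-1. 1 / ((real i)^2 * (real (m - i))^2))"
    unfolding sum_distrib_left by (rule sum_mono) (rule term_le)
  also have "\<dots> \<le> C * (8 / (real m)^2)"
    by (intro mult_left_mono sum_inverse_squares_convolution_le C)
  also have "\<dots> = 8^(Suc j - 1) * L^m / (K^Suc j * (real m)^2)"
    unfolding C_def using Suc.hyps by (cases j) (simp_all add: field_simps)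
  finally show ?case .
qed

lemma fps_inv_nth_0 [simp]: "fps_inv a $ 0 = 0"
  by (simp add: fps_inv_def)

lemma fps_inv_nth_1: "fps_inv a $ 1 = 1 / a $ 1"
  by (simp add: fps_inv_def)

lemma fps_inv_nth_recurrence:
  fixes a :: "'a::field fps"
  assumes a0: "a $ 0 = 0" and a1: "a $ 1 \<noteq> 0" and n: "n \<ge> 2"
  shows "fps_inv a $ n = - (\<Sum>i=2..n. a $ i * (fps_inv a ^ i) $ n) / a $ 1"
proof -
  have "(a oo fps_inv a) $ n = 0" using fps_inv_right[OF a0 a1] n by simp
  moreover have "{0..n} = insert 0 (insert 1 {2..n})" using n by auto
  ultimately have "a $ 1 * fps_inv a $ n + (\<Sum>i=2..n. a $ i * (fps_inv a ^ i) $ n) = 0"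
    using a0 by (simp add: fps_compose_nth)
  then show ?thesis using a1 by (simp add: field_simps eq_neg_iff_add_eq_0)
qed

lemma fps_compose_tail_nth_le:
  fixes a b :: "'a::field fps"
  assumes v: "absval v" and R: "R \<ge> 1" and a_le: "\<And>i. i \<ge> 1 \<Longrightarrow> v (a $ i) \<le> R^i"
    and K: "K \<ge> 16 * R" and L: "L \<ge> 0"
    and power_le: "\<And>i. i \<in> {2..n} \<Longrightarrow> v ((b ^ i) $ n) \<le> 8^(i-1) * L^n / (K^i * (real n)^2)"
  shows "v (\<Sum>i=2..n. a $ i * (b ^ i) $ n) \<le> L^n / (K * (real n)^2) * (16 * R^2 / K)"
proof -
  define q where "q = 8 * R / K"
  have "K > 0" using K R by linarith
  have q: "0 \<le> q" "q \<le> 1/2" using K R by (auto simp: q_def field_simps)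
  have "v (\<Sum>i=2..n. a $ i * (b ^ i) $ n) \<le> (\<Sum>i=2..n. R^i * (8^(i-1) * L^n / (K^i * (real n)^2)))"
  proof (intro order_trans[OF absval_sum_le[OF v]] sum_mono)
    fix i assume i: "i \<in> {2..n}"
    show "v (a $ i * (b ^ i) $ n) \<le> R^i * (8^(i-1) * L^n / (K^i * (real n)^2))"
      unfolding absval_mult[OF v] using i R
      by (intro mult_mono a_le power_le absval_nonneg[OF v]) auto
  qed
  also have "\<dots> = L^n / (K * (real n)^2) * R * (\<Sum>i=2..n. q^(i-1))"
    unfolding sum_distrib_left
  proof (rule sum.cong)
    fix i assume "i \<in> {2..n}"
    then have i: "i = Suc (i - 1)" by auto
    have "R^i * (8^(i-1) * L^n / (K^i * (real n)^2))
        = R * R^(i-1) * (8^(i-1) * L^n / (K * K^(i-1) * (real n)^2))"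
      by (subst (1 2) i) simp
    also have "\<dots> = L^n / (K * (real n)^2) * R * q^(i-1)"
      using \<open>K > 0\<close> by (simp add: q_def field_simps)
    finally show "R^i * (8^(i-1) * L^n / (K^i * (real n)^2)) = L^n / (K * (real n)^2) * R * q^(i-1)" .
  qed simp
  also have "\<dots> \<le> L^n / (K * (real n)^2) * R * (2 * q)"
    by (intro mult_left_mono geometric_sum_le_twice q) (use \<open>K > 0\<close> L R in auto)
  also have "\<dots> = L^n / (K * (real n)^2) * (16 * R^2 / K)"
    by (simp add: q_def power2_eq_square)
  finally show ?thesis .
qed

text \<open>\<open>K\<close> is chosen so that the terms \<open>i \<ge> 2\<close> of the recursion for the coefficients of
  \<open>fps_inv a\<close> are at most \<open>|a_1|\<close> times the bound \<open>L^n / (K n^2)\<close> to be propagated.\<close>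

lemma fps_inv_nth_quadratic_decay:
  fixes a :: "'a::field fps"
  assumes v: "absval v" and a0: "a $ 0 = 0" and a1: "a $ 1 \<noteq> 0" and R: "R \<ge> 1"
    and a_le: "\<And>n. n \<ge> 1 \<Longrightarrow> v (a $ n) \<le> R^n"
  obtains K L where "K > 0" "L \<ge> 0" "\<And>n. n \<ge> 1 \<Longrightarrow> v (fps_inv a $ n) \<le> L^n / (K * (real n)^2)"
proof
  define c where "c = v (a $ 1)"
  have c: "c > 0" using absval_pos[OF v a1] by (simp add: c_def)
  define K where "K = 16 * R^2 / c + 16 * R"
  define L where "L = K / c"
  have K_ge: "K \<ge> 16 * R" using c by (simp add: K_def)
  show K: "K > 0" using R c by (simp add: K_def add_nonneg_pos)
  show L: "L \<ge> 0" using K c by (simp add: L_def)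
  show "v (fps_inv a $ n) \<le> L^n / (K * (real n)^2)" if "n \<ge> 1" for n
    using that
  proof (induction n rule: less_induct)
    case (less n)
    let ?b = "fps_inv a"
    show ?case
    proof (cases "n = 1")
      case True
      have "v (?b $ 1) = 1 / c"
        using fps_inv_nth_1[of a] absval_divide[OF v, of 1 "a $ 1"] by (simp add: c_def v)
      then show ?thesis using True K c by (simp add: L_def)
    next
      case False
      then have n: "n \<ge> 2" using less.prems by auto
      have "v (\<Sum>i=2..n. a $ i * (?b ^ i) $ n) \<le> L^n / (K * (real n)^2) * (16 * R^2 / K)"
      proof (rule fps_compose_tail_nth_le[OF v R a_le K_ge L])
        show "v ((?b ^ i) $ n) \<le> 8^(i-1) * L^n / (K^i * (real n)^2)" if "i \<in> {2..n}" for i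
          using fps_power_nth_quadratic_decay[OF v fps_inv_nth_0 less.IH K L, where j=i and m=n] that n
          by auto
      qed
      also have "\<dots> \<le> L^n / (K * (real n)^2) * c"
        using K L c R by (intro mult_left_mono) (simp_all add: K_def field_simps)
      finally show ?thesis
        using c by (simp add: fps_inv_nth_recurrence[OF a0 a1 n] absval_divide[OF v] c_def field_simps v)
    qed
  qed
qed

lemma fps_inv_geometric_bound:
  fixes a :: "'a::field fps"
  assumes v: "absval v" and a0: "a $ 0 = 0" and a1: "a $ 1 \<noteq> 0" and R: "R \<ge> 1"
    and a_le: "\<And>n. n \<ge> 1 \<Longrightarrow> v (a $ n) \<le> R^n"
  shows "\<exists>M\<ge>1. \<forall>n\<ge>1. v (fps_inv a $ n) \<le> M^n"
proof -
  obtain K L where K: "K > 0" and L: "L \<ge> 0"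
    and decay: "\<And>n. n \<ge> 1 \<Longrightarrow> v (fps_inv a $ n) \<le> L^n / (K * (real n)^2)"
    using fps_inv_nth_quadratic_decay[OF assms] by blast
  define M where "M = max 1 (L * max 1 (1 / K))"
  have "v (fps_inv a $ n) \<le> M^n" if n: "n \<ge> 1" for n
  proof -
    have "v (fps_inv a $ n) \<le> L^n / K"
      using decay[OF n] K L n by (simp add: divide_left_mono order_trans)
    also have "\<dots> \<le> L^n * max 1 (1 / K)^n"
    proof -
      have "1 / K \<le> max 1 (1 / K)^1" by simp
      also have "\<dots> \<le> max 1 (1 / K)^n" using n by (intro power_increasing) auto
      finally show ?thesis using L by (simp add: divide_inverse mult_left_mono)
    qed
    also have "\<dots> \<le> M^n"
      unfolding power_mult_distrib[symmetric] M_def using L K by (intro power_mono) auto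
    finally show ?thesis .
  qed
  moreover have "M \<ge> 1" by (simp add: M_def)
  ultimately show ?thesis by blast
qed

lemma fps_radius_at_fps_inv_pos:
  fixes a :: "'a::field fps"
  assumes v: "absval v" and a0: "a $ 0 = 0" and a1: "a $ 1 \<noteq> 0"
    and "fps_radius_at v a > 0"
  shows "fps_radius_at v (fps_inv a) > 0"
  using assms(4) fps_inv_geometric_bound[OF v a0 a1]
  by (auto simp: fps_radius_at_pos_iff_geometric_bound absval_nonneg[OF v])

section \<open>Integrality at non-Archimedean places\<close>

lemma fps_power_nth_le_1:
  fixes f :: "'a::field fps"
  assumes v: "absval v" and ultra: "\<not> archimedean_absval v" and f0: "f $ 0 = 0"
    and f_le: "\<And>k. k < n \<Longrightarrow> v (f $ k) \<le> 1"
  shows "1 \<le> j \<Longrightarrow> m \<le> n \<Longrightarrow> 2 \<le> j \<or> m < n \<Longrightarrow> v ((f ^ j) $ m) \<le> 1"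
proof (induction j arbitrary: m rule: nat_induct_at_least)
  case base
  then show ?case using f_le[of m] by simp
next
  case (Suc j)
  have "v (f $ i * (f ^ j) $ (m - i)) \<le> 1" if i: "i \<in> {0..m}" for i
  proof (cases "i = 0 \<or> i = m")
    case True
    then show ?thesis using f0 Suc.hyps by (auto simp: v fps_power_zeroth zero_power)
  next
    case False
    then have "i < n" "m - i \<le> n" "m - i < n" using i Suc.prems by auto
    then have "v (f $ i) \<le> 1" "v ((f ^ j) $ (m - i)) \<le> 1" using f_le Suc.IH by auto
    then show ?thesis by (simp add: absval_mult[OF v] absval_nonneg[OF v] mult_le_one)
  qed
  then show ?case
    unfolding power_Suc fps_mult_nth by (intro absval_ultrametric_sum_le[OF v ultra]) auto
qed

lemma fps_inv_nth_le_1: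
  fixes a :: "'a::field fps"
  assumes v: "absval v" and ultra: "\<not> archimedean_absval v"
    and a0: "a $ 0 = 0" and a1: "a $ 1 \<noteq> 0"
    and a_le: "\<And>k. v (a $ k) \<le> 1" and a1_inv_le: "v (1 / a $ 1) \<le> 1"
  shows "v (fps_inv a $ n) \<le> 1"
proof (induction n rule: less_induct)
  case (less n)
  let ?b = "fps_inv a"
  consider "n = 0" | "n = 1" | "n \<ge> 2" by linarith
  then show ?case
  proof cases
    case 1 then show ?thesis by (simp add: v)
  next
    case 2 then show ?thesis using a1_inv_le fps_inv_nth_1[of a] by simp
  next
    case 3
    have "v ((?b ^ i) $ n) \<le> 1" if "i \<in> {2..n}" for i
      using fps_power_nth_le_1[OF v ultra fps_inv_nth_0 less.IH, where j=i and m=n] that by auto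
    then have "v (\<Sum>i=2..n. a $ i * (?b ^ i) $ n) \<le> 1"
      using a_le by (intro absval_ultrametric_sum_le[OF v ultra])
        (auto simp: absval_mult[OF v] absval_nonneg[OF v] mult_le_one)
    moreover have "v (?b $ n) = v (\<Sum>i=2..n. a $ i * (?b ^ i) $ n) * v (1 / a $ 1)"
      unfolding fps_inv_nth_recurrence[OF a0 a1 3] absval_uminus[OF v] absval_divide[OF v]
      by (simp add: v)
    ultimately show ?thesis
      using a1_inv_le by (simp add: absval_nonneg[OF v] mult_le_one)
  qed
qed

section \<open>Equivalence of absolute values\<close>

lemma nontrivial_absvalD: "nontrivial_absval v \<Longrightarrow> absval v"
  unfolding nontrivial_absval_def by simp

lemma equiv_absval_refl: "absval v \<Longrightarrow> equiv_absval v v"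
  unfolding equiv_absval_def by (intro exI[of _ 1]) (auto simp: absval_nonneg)

lemma equiv_absval_sym:
  assumes "absval v" "equiv_absval v w"
  shows "equiv_absval w v"
proof -
  obtain c where c: "c > 0" "\<And>x. w x = v x powr c" using assms(2) unfolding equiv_absval_def by auto
  have "v x = w x powr (1 / c)" for x
    using c absval_nonneg[OF assms(1), of x] by (simp add: powr_powr)
  then show ?thesis unfolding equiv_absval_def using c by (intro exI[of _ "1 / c"]) auto
qed

lemma nontrivial_absval_obtain_gt_1:
  assumes "nontrivial_absval v"
  obtains y where "v y > 1"
proof -
  have v: "absval v" using assms by (rule nontrivial_absvalD)
  obtain x where x: "x \<noteq> 0" "v x \<noteq> 1" using assms unfolding nontrivial_absval_def by auto
  show ?thesis
  proof (cases "v x > 1")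
    case False
    then have "v (inverse x) > 1"
      using x absval_pos[OF v x(1)] by (simp add: absval_inverse[OF v] one_less_inverse)
    then show ?thesis by (rule that)
  qed (rule that)
qed

lemma eq_if_same_side_of_fractions:
  fixes A B :: real
  assumes "A > 0"
    and below: "\<And>m n :: nat. m > 0 \<Longrightarrow> n > 0 \<Longrightarrow> A < real m / real n \<Longrightarrow> B < real m / real n"
    and above: "\<And>m n :: nat. m > 0 \<Longrightarrow> n > 0 \<Longrightarrow> real m / real n < A \<Longrightarrow> real m / real n < B"
  shows "A = B"
proof -
  have fraction_between: "\<exists>m n :: nat. m > 0 \<and> n > 0 \<and> a < real m / real n \<and> real m / real n < b"
    if ab: "0 < a" "a < b" for a b :: real
  proof -
    obtain r where r: "r \<in> \<rat>" "a < r" "r < b" using Rats_dense_in_real[OF ab(2)] by auto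
    obtain i j :: int where ij: "j > 0" "r = of_int i / of_int j" using Rats_cases'[OF r(1)] by metis
    have "i > 0" using ij r ab by (smt (verit) divide_nonpos_pos of_int_0_less_iff of_int_le_0_iff)
    then show ?thesis using ij r by (intro exI[of _ "nat i"] exI[of _ "nat j"]) auto
  qed
  show ?thesis
  proof (rule ccontr)
    assume "A \<noteq> B"
    then consider "A < B" | "B < A" by linarith
    then show False
    proof cases
      case 1
      then obtain m n :: nat where mn: "m > 0" "n > 0" "A < real m / real n" "real m / real n < B"
        using fraction_between[OF assms(1)] by blast
      then have "B < real m / real n" using below by blast
      with mn(4) show False by linarith
    next
      case 2
      obtain m n :: nat where mn: "m > 0" "n > 0" "real m / real n < A"
        using fraction_between[of "A / 2" A] assms(1) by auto
      then have "real m / real n < B" using above by blast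
      then have "B > 0" using mn by (smt (verit) divide_pos_pos of_nat_0_less_iff)
      then obtain m n :: nat where mn: "m > 0" "n > 0" "B < real m / real n" "real m / real n < A"
        using fraction_between 2 by blast
      then have "real m / real n < B" using above by blast
      with mn(3) show False by linarith
    qed
  qed
qed

context
  fixes v w :: "'a::field \<Rightarrow> real"
  assumes v: "absval v" and w: "absval w"
    and less_1: "\<And>x. v x < 1 \<Longrightarrow> w x < 1"
begin

lemma absval_power_less_transfer:
  assumes "y \<noteq> 0" "v x ^ n < v y ^ m"
  shows "w x ^ n < w y ^ m"
proof -
  have "v (x^n / y^m) = v x ^ n / v y ^ m"
    by (simp only: absval_divide[OF v] absval_power[OF v])
  also have "\<dots> < 1" using assms(2) absval_pos[OF v assms(1)] by (simp add: divide_less_eq_1)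
  finally have "w (x^n / y^m) < 1" by (rule less_1)
  moreover have "w (x^n / y^m) = w x ^ n / w y ^ m"
    by (simp only: absval_divide[OF w] absval_power[OF w])
  ultimately show ?thesis using absval_pos[OF w assms(1)] by (simp add: divide_less_eq_1)
qed

lemma absval_gt_1_transfer:
  assumes "v x > 1"
  shows "w x > 1"
proof -
  have "v 1 ^ 1 < v x ^ 1" using assms by (simp add: v)
  then have "w 1 ^ 1 < w x ^ 1" using assms by (intro absval_power_less_transfer) (auto simp: v)
  then show ?thesis by (simp add: w)
qed

lemma absval_log_ratio_transfer:
  assumes x: "v x > 1" and y: "v y > 1"
  shows "ln (w x) / ln (w y) = ln (v x) / ln (v y)"
proof (rule sym, rule eq_if_same_side_of_fractions)
  have wx: "w x > 1" and wy: "w y > 1" using x y by (auto intro: absval_gt_1_transfer)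
  have x0: "x \<noteq> 0" and y0: "y \<noteq> 0" using x y by (auto simp: v)
  show "ln (v x) / ln (v y) > 0" using x y by simp
  fix m n :: nat assume "m > 0" "n > 0"
  have log_iff: "u a ^ n < u b ^ m \<longleftrightarrow> ln (u a) / ln (u b) < real m / real n"
    if "u a > 1" "u b > 1" for u :: "'a \<Rightarrow> real" and a b
  proof -
    have "u a ^ n < u b ^ m \<longleftrightarrow> ln (u a ^ n) < ln (u b ^ m)" using that by simp
    also have "\<dots> \<longleftrightarrow> real n * ln (u a) < real m * ln (u b)" by (simp add: ln_realpow)
    finally show ?thesis using that \<open>n > 0\<close> by (simp add: field_simps)
  qed
  have log_iff': "u b ^ m < u a ^ n \<longleftrightarrow> real m / real n < ln (u a) / ln (u b)"
    if "u a > 1" "u b > 1" for u :: "'a \<Rightarrow> real" and a b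
  proof -
    have "u b ^ m < u a ^ n \<longleftrightarrow> ln (u b ^ m) < ln (u a ^ n)" using that by simp
    also have "\<dots> \<longleftrightarrow> real m * ln (u b) < real n * ln (u a)" by (simp add: ln_realpow)
    finally show ?thesis using that \<open>n > 0\<close> by (simp add: field_simps)
  qed
  show "ln (v x) / ln (v y) < real m / real n \<Longrightarrow> ln (w x) / ln (w y) < real m / real n"
    using log_iff[of v x y] log_iff[of w x y] absval_power_less_transfer[OF y0] x y wx wy by blast
  show "real m / real n < ln (v x) / ln (v y) \<Longrightarrow> real m / real n < ln (w x) / ln (w y)"
    using log_iff'[of v x y] log_iff'[of w x y] absval_power_less_transfer[OF x0] x y wx wy by blast
qed

lemma absval_eq_1_transfer:
  assumes y: "v y > 1" and x: "v x = 1"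
  shows "w x = 1"
proof -
  have x0: "x \<noteq> 0" and y0: "y \<noteq> 0" using x y by (auto simp: v)
  have wy: "w y > 1" using y by (rule absval_gt_1_transfer)
  \<comment> \<open>if \<open>w x \<noteq> 1\<close>, some power of \<open>x\<close> or of \<open>1/x\<close> beats \<open>y\<close> at \<open>w\<close> but not at \<open>v\<close>\<close>
  have "\<not> w z > 1" if "v z = 1" "z \<noteq> 0" for z
  proof
    assume "w z > 1"
    then obtain n where "w z ^ n > w y" using real_arch_pow by blast
    moreover have "w z ^ n < w y ^ 1"
      using absval_power_less_transfer[OF y0, of z n 1] that y by (simp add: absval_power[OF v])
    ultimately show False by simp
  qed
  from this[OF x x0] this[of "inverse x"] show ?thesis
    using x x0 absval_pos[OF w x0]
    by (simp add: absval_inverse[OF v] absval_inverse[OF w] one_less_inverse_iff)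
qed

end

lemma equiv_absval_if_less_1_imp:
  assumes v: "nontrivial_absval v" and w: "absval w"
    and less_1: "\<And>x. v x < 1 \<Longrightarrow> w x < 1"
  shows "equiv_absval v w"
proof -
  have v': "absval v" using v by (rule nontrivial_absvalD)
  have transfer_gt_1: "w x > 1" if "v x > 1" for x
    by (rule absval_gt_1_transfer[of v w]) (use v' w less_1 that in auto)
  have transfer_log_ratio: "ln (w x) / ln (w y) = ln (v x) / ln (v y)" if "v x > 1" "v y > 1" for x y
    by (rule absval_log_ratio_transfer[of v w]) (use v' w less_1 that in auto)
  have transfer_eq_1: "w x = 1" if "v y > 1" "v x = 1" for x y
    by (rule absval_eq_1_transfer[of v w]) (use v' w less_1 that in auto)
  obtain y where y: "v y > 1" using nontrivial_absval_obtain_gt_1[OF v] by blast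
  have wy: "w y > 1" using transfer_gt_1[OF y] .
  define c where "c = ln (w y) / ln (v y)"
  have c: "c > 0" using y wy by (simp add: c_def)
  have log_w: "ln (w x) = c * ln (v x)" if x: "x \<noteq> 0" for x
  proof -
    consider "v x > 1" | "v (inverse x) > 1" | "v x = 1"
      using absval_pos[OF v' x] by (fastforce simp: absval_inverse[OF v'] one_less_inverse_iff)
    then show ?thesis
    proof cases
      case 1
      then show ?thesis using transfer_log_ratio[OF 1 y] y wy by (simp add: c_def field_simps)
    next
      case 2
      have "ln (w (inverse x)) = - ln (w x)" "ln (v (inverse x)) = - ln (v x)"
        using absval_pos[OF w x] absval_pos[OF v' x]
        by (simp_all add: absval_inverse[OF w] absval_inverse[OF v'] ln_inverse)
      then show ?thesis using transfer_log_ratio[OF 2 y] y wy by (simp add: c_def field_simps)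
    next
      case 3
      then show ?thesis using transfer_eq_1[OF y] by simp
    qed
  qed
  have "w x = v x powr c" for x
  proof (cases "x = 0")
    case False
    have "w x = exp (ln (w x))" using absval_pos[OF w False] by simp
    also have "\<dots> = v x powr c" using log_w[OF False] absval_pos[OF v' False] by (simp add: powr_def)
    finally show ?thesis .
  qed (simp add: v' w)
  then show ?thesis unfolding equiv_absval_def using c by auto
qed

context
  fixes w :: "'a::field \<Rightarrow> real" and z :: 'a
  assumes w: "absval w"
begin

lemma absval_power_ratio_tendsto_0:
  assumes "w z < 1"
  shows "(\<lambda>r. w (z^r / (1 + z^r))) \<longlonglongrightarrow> 0"
proof (rule tendsto_sandwich[of "\<lambda>_. 0" _ _ "\<lambda>r. 2 * w z ^ r"])
  have pow: "(\<lambda>r. w z ^ r) \<longlonglongrightarrow> 0"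
    using assms absval_nonneg[OF w, of z] by (intro LIMSEQ_power_zero) auto
  then show "(\<lambda>r. 2 * w z ^ r) \<longlonglongrightarrow> 0" using tendsto_mult_right_zero by blast
  have "eventually (\<lambda>r. w z ^ r < 1/2) sequentially"
    using order_tendstoD(2)[OF pow, of "1/2"] by simp
  then show "eventually (\<lambda>r. w (z^r / (1 + z^r)) \<le> 2 * w z ^ r) sequentially"
  proof (rule eventually_mono)
    fix r assume r: "w z ^ r < 1/2"
    have "1 - w z ^ r \<le> w (1 + z^r)"
      using absval_reverse_triangle_add[OF w, of 1 "z^r"] by (simp add: absval_power[OF w] w)
    then have "w (1 + z^r) \<ge> 1/2" using r by linarith
    then have "w z ^ r / w (1 + z^r) \<le> w z ^ r / (1/2)"
      by (intro divide_left_mono) (auto simp: absval_nonneg[OF w])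
    then show "w (z^r / (1 + z^r)) \<le> 2 * w z ^ r" by (simp add: absval_divide[OF w] absval_power[OF w])
  qed
qed (auto simp: absval_nonneg[OF w])

context
  assumes z: "w z > 1"
begin

lemma one_plus_power_neq_0:
  assumes "r \<ge> 1"
  shows "1 + z^r \<noteq> 0"
proof
  assume "1 + z^r = 0"
  then have "w z ^ r = 1" using absval_minus_one[OF w] by (metis absval_power[OF w] add_eq_0_iff)
  moreover have "w z ^ r > 1" using z assms by simp
  ultimately show False by simp
qed

lemma absval_inverse_one_plus_power_tendsto_0: "(\<lambda>r. w (1 / (1 + z^r))) \<longlonglongrightarrow> 0"
proof (rule tendsto_sandwich[of "\<lambda>_. 0" _ _ "\<lambda>r. 2 * inverse (w z) ^ r"])
  have pow: "(\<lambda>r. inverse (w z) ^ r) \<longlonglongrightarrow> 0"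
    using z by (intro LIMSEQ_power_zero) (simp add: inverse_less_1_iff)
  then show "(\<lambda>r. 2 * inverse (w z) ^ r) \<longlonglongrightarrow> 0" using tendsto_mult_right_zero by blast
  have "eventually (\<lambda>r. inverse (w z) ^ r < 1/2) sequentially"
    using order_tendstoD(2)[OF pow, of "1/2"] by simp
  then show "eventually (\<lambda>r. w (1 / (1 + z^r)) \<le> 2 * inverse (w z) ^ r) sequentially"
  proof (rule eventually_mono)
    fix r assume r: "inverse (w z) ^ r < 1/2"
    have big: "w z ^ r > 2" using r z by (simp add: field_simps)
    have "w z ^ r - 1 \<le> w (z^r + 1)"
      using absval_reverse_triangle_add[OF w, of "z^r" 1] by (simp add: absval_power[OF w] w)
    then have "w (1 + z^r) \<ge> w z ^ r / 2" using big by (simp add: add.commute)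
    then have "1 / w (1 + z^r) \<le> 1 / (w z ^ r / 2)" using big by (intro divide_left_mono) auto
    then show "w (1 / (1 + z^r)) \<le> 2 * inverse (w z) ^ r"
      by (simp add: absval_divide[OF w] w field_simps)
  qed
qed (auto simp: absval_nonneg[OF w])

lemma absval_power_ratio_tendsto_1: "(\<lambda>r. w (z^r / (1 + z^r))) \<longlonglongrightarrow> 1"
proof (rule tendsto_sandwich[of "\<lambda>r. 1 - w (1 / (1 + z^r))" _ _ "\<lambda>r. 1 + w (1 / (1 + z^r))"])
  note lim = absval_inverse_one_plus_power_tendsto_0
  show "(\<lambda>r. 1 - w (1 / (1 + z^r))) \<longlonglongrightarrow> 1" using tendsto_diff[OF tendsto_const lim] by simp
  show "(\<lambda>r. 1 + w (1 / (1 + z^r))) \<longlonglongrightarrow> 1" using tendsto_add[OF tendsto_const lim] by simp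
  have ratio: "z^r / (1 + z^r) = 1 - 1 / (1 + z^r)" if "r \<ge> 1" for r
    using one_plus_power_neq_0[OF that] by (simp add: field_simps)
  show "eventually (\<lambda>r. 1 - w (1 / (1 + z^r)) \<le> w (z^r / (1 + z^r))) sequentially"
    using eventually_ge_at_top[of 1]
    by (rule eventually_mono) (simp add: ratio absval_reverse_triangle[OF w, of 1, simplified w absval_one])
  show "eventually (\<lambda>r. w (z^r / (1 + z^r)) \<le> 1 + w (1 / (1 + z^r))) sequentially"
    using eventually_ge_at_top[of 1]
    by (rule eventually_mono) (simp add: ratio absval_diff_le[OF w, of 1, simplified w absval_one])
qed

end

end

lemma inequivalent_absvals_separating_element:
  assumes v: "nontrivial_absval v" and w: "nontrivial_absval w"
    and "\<not> equiv_absval v w" "\<not> equiv_absval w v"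
  obtains y where "v y > 1" "w y < 1"
proof -
  have v': "absval v" and w': "absval w" using v w by (auto intro: nontrivial_absvalD)
  obtain a where a: "v a < 1" "w a \<ge> 1"
    using equiv_absval_if_less_1_imp[OF v w'] assms(3) by force
  obtain b where b: "w b < 1" "v b \<ge> 1"
    using equiv_absval_if_less_1_imp[OF w v'] assms(4) by force
  have a0: "a \<noteq> 0" using a w' by auto
  have "v (b / a) > 1" "w (b / a) < 1"
    using a b absval_pos[OF v' a0] absval_pos[OF w' a0]
    by (simp_all add: absval_divide[OF v'] absval_divide[OF w'] field_simps)
  then show ?thesis by (rule that)
qed

text \<open>The sequence is \<open>z^r\<close> if \<open>|z|_w0 \<le> 1\<close> and \<open>z^r / (1 + z^r)\<close> otherwise.\<close>

lemma separating_sequence: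
  assumes v0: "absval v0" and w0: "absval w0" and W: "\<And>w. w \<in> W \<Longrightarrow> absval w"
    and z: "v0 z > 1" "\<And>w. w \<in> W \<Longrightarrow> w z < 1"
  obtains t :: "nat \<Rightarrow> 'a::field" where
    "\<And>w. w \<in> W \<Longrightarrow> (\<lambda>r. w (t r)) \<longlonglongrightarrow> 0"
    "\<And>c. c > 1 \<Longrightarrow> eventually (\<lambda>r. v0 (t r) * c > 1) sequentially"
    "\<And>c. 0 \<le> c \<Longrightarrow> c < 1 \<Longrightarrow> eventually (\<lambda>r. w0 (t r) * c < 1) sequentially"
proof (cases "w0 z \<le> 1")
  case True
  show ?thesis
  proof (rule that[of "\<lambda>r. z^r"])
    show "(\<lambda>r. w (z^r)) \<longlonglongrightarrow> 0" if "w \<in> W" for w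
      using z(2)[OF that] absval_nonneg[OF W[OF that], of z]
      by (simp add: absval_power[OF W[OF that]] LIMSEQ_power_zero)
    show "eventually (\<lambda>r. v0 (z^r) * c > 1) sequentially" if "c > 1" for c
      using z(1) that by (intro always_eventually allI) (simp add: absval_power[OF v0]
          less_le_trans[OF _ mult_right_mono[of 1 _ c]])
    show "eventually (\<lambda>r. w0 (z^r) * c < 1) sequentially" if "0 \<le> c" "c < 1" for c
    proof (intro always_eventually allI)
      fix r
      have "w0 (z^r) \<le> 1" using True absval_nonneg[OF w0, of z] by (simp add: absval_power[OF w0] power_le_one)
      then have "w0 (z^r) * c \<le> c" using that absval_nonneg[OF w0] by (simp add: mult_left_le_one_le)
      then show "w0 (z^r) * c < 1" using that by linarith
    qed
  qed
next
  case False
  show ?thesis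
  proof (rule that[of "\<lambda>r. z^r / (1 + z^r)"])
    show "(\<lambda>r. w (z^r / (1 + z^r))) \<longlonglongrightarrow> 0" if "w \<in> W" for w
      using absval_power_ratio_tendsto_0[OF W[OF that] z(2)[OF that]] .
    show "eventually (\<lambda>r. v0 (z^r / (1 + z^r)) * c > 1) sequentially" if "c > 1" for c
    proof -
      have "(\<lambda>r. v0 (z^r / (1 + z^r)) * c) \<longlonglongrightarrow> 1 * c"
        by (intro tendsto_mult absval_power_ratio_tendsto_1 v0 z(1) tendsto_const)
      then show ?thesis using order_tendstoD(1) that by fastforce
    qed
    show "eventually (\<lambda>r. w0 (z^r / (1 + z^r)) * c < 1) sequentially" if "0 \<le> c" "c < 1" for c
    proof -
      have "(\<lambda>r. w0 (z^r / (1 + z^r)) * c) \<longlonglongrightarrow> 1 * c"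
        using False by (intro tendsto_mult absval_power_ratio_tendsto_1 w0 tendsto_const) simp
      then show ?thesis using order_tendstoD(2) that(2) by fastforce
    qed
  qed
qed

lemma separating_element_insert:
  assumes v0: "absval v0" and w0: "absval w0" and W: "finite W" "\<And>w. w \<in> W \<Longrightarrow> absval w"
    and z: "v0 z > 1" "\<And>w. w \<in> W \<Longrightarrow> w z < 1"
    and y: "v0 y > 1" "w0 y < 1"
  shows "\<exists>x. v0 x > 1 \<and> w0 x < 1 \<and> (\<forall>w\<in>W. w x < 1)"
proof -
  obtain t where t_W: "\<And>w. w \<in> W \<Longrightarrow> (\<lambda>r. w (t r)) \<longlonglongrightarrow> 0"
    and t_v0: "\<And>c. c > 1 \<Longrightarrow> eventually (\<lambda>r. v0 (t r) * c > 1) sequentially"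
    and t_w0: "\<And>c. 0 \<le> c \<Longrightarrow> c < 1 \<Longrightarrow> eventually (\<lambda>r. w0 (t r) * c < 1) sequentially"
    by (rule separating_sequence[of v0 w0 W z]) (use v0 w0 W z in auto)
  have "eventually (\<lambda>r. \<forall>w\<in>W. w (t r) * w y < 1) sequentially"
  proof (rule eventually_ball_finite[OF W(1)], rule ballI)
    fix w assume "w \<in> W"
    then have "(\<lambda>r. w (t r) * w y) \<longlonglongrightarrow> 0" using t_W tendsto_mult_left_zero by blast
    then show "eventually (\<lambda>r. w (t r) * w y < 1) sequentially" using order_tendstoD(2) by fastforce
  qed
  then have "eventually (\<lambda>r. (\<forall>w\<in>W. w (t r) * w y < 1) \<and> v0 (t r) * v0 y > 1 \<and> w0 (t r) * w0 y < 1)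
      sequentially"
    using t_v0[OF y(1)] t_w0[OF absval_nonneg[OF w0] y(2)] by (intro eventually_conj)
  then obtain r where "\<forall>w\<in>W. w (t r) * w y < 1" "v0 (t r) * v0 y > 1" "w0 (t r) * w0 y < 1"
    unfolding eventually_sequentially by blast
  then show ?thesis using W(2) by (intro exI[of _ "t r * y"]) (simp add: absval_mult v0 w0)
qed

lemma absval_approximation:
  assumes "finite V" and nontrivial: "\<And>v. v \<in> V \<Longrightarrow> nontrivial_absval v"
    and inequiv: "pairwise (\<lambda>v w. \<not> equiv_absval v w) V" and "v0 \<in> V"
  shows "\<exists>z. v0 z > 1 \<and> (\<forall>w\<in>V - {v0}. w z < 1)"
proof -
  have v0: "absval v0" using nontrivial[OF \<open>v0 \<in> V\<close>] by (rule nontrivial_absvalD)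
  have "\<exists>z. v0 z > 1 \<and> (\<forall>w\<in>W. w z < 1)" if "finite W" "W \<subseteq> V - {v0}" for W
    using that
  proof (induction W rule: finite_induct)
    case empty
    then show ?case using nontrivial_absval_obtain_gt_1[OF nontrivial[OF \<open>v0 \<in> V\<close>]] by blast
  next
    case (insert w0 W)
    then obtain z where z: "v0 z > 1" "\<forall>w\<in>W. w z < 1" by auto
    have w0: "w0 \<in> V" "w0 \<noteq> v0" using insert.prems by auto
    obtain y where y: "v0 y > 1" "w0 y < 1"
      using inequivalent_absvals_separating_element[OF nontrivial[OF \<open>v0 \<in> V\<close>] nontrivial[OF w0(1)]]
        inequiv \<open>v0 \<in> V\<close> w0 unfolding pairwise_def by metis
    have "\<And>w. w \<in> W \<Longrightarrow> absval w" using insert.prems nontrivial nontrivial_absvalD by blast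
    then show ?case
      using separating_element_insert[OF v0 nontrivial_absvalD[OF nontrivial[OF w0(1)]] insert.hyps(1)]
        z y by auto
  qed
  then show ?thesis using assms(1) by auto
qed

section \<open>Places above a prime\<close>

locale padic_place =
  fixes p :: nat and v :: "'a::field_char_0 \<Rightarrow> real"
  assumes prime: "prime p" and absval: "absval v" and ultra: "\<not> archimedean_absval v"
    and p_less_1: "v (of_nat p) < 1"
begin

lemma p_pos: "v (of_nat p) > 0"
  using prime absval_pos[OF absval, of "of_nat p"] by (simp add: prime_gt_0_nat)

lemma absval_of_int_coprime:
  assumes "\<not> int p dvd m"
  shows "v (of_int m) = 1"
proof -
  have "coprime (int p) m" using prime assms by (simp add: prime_imp_coprime)
  then obtain s t where st: "s * int p + t * m = 1" using bezout_int[of "int p" m] by auto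
  have "1 = v (of_int s * of_nat p + of_int t * of_int m)"
    using arg_cong[OF st, of "\<lambda>k. v (of_int k)"] by (simp add: absval)
  also have "\<dots> \<le> max (v (of_int s) * v (of_nat p)) (v (of_int t) * v (of_int m))"
    using absval_ultrametric[OF absval ultra, of "of_int s * of_nat p" "of_int t * of_int m"]
    by (simp only: absval_mult[OF absval])
  finally have "1 \<le> max (v (of_int s) * v (of_nat p)) (v (of_int t) * v (of_int m))" .
  moreover have "v (of_int s) * v (of_nat p) \<le> v (of_nat p)"
    using absval_of_int_le_1[OF absval ultra, of s] p_pos by (simp add: mult_left_le_one_le)
  ultimately have "1 \<le> v (of_int t) * v (of_int m)" using p_less_1 by (auto simp: le_max_iff_disj)
  also have "\<dots> \<le> v (of_int m)"
    using absval_of_int_le_1[OF absval ultra, of t]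
    by (intro mult_left_le_one_le) (auto simp: absval_nonneg[OF absval])
  finally show ?thesis using absval_of_int_le_1[OF absval ultra, of m] by linarith
qed

lemma absval_of_int_eq_power:
  assumes "m \<noteq> 0"
  shows "v (of_int m) = v (of_nat p) ^ multiplicity (int p) m"
proof -
  obtain u where u: "m = int p ^ multiplicity (int p) m * u" "\<not> int p dvd u"
  proof (rule multiplicity_decompose'[of m "int p"])
    show "\<not> is_unit (int p)" using prime prime_gt_1_nat by fastforce
  qed (use assms in auto)
  have "v (of_int m) = v (of_nat p) ^ multiplicity (int p) m * v (of_int u)"
    by (subst u(1)) (simp add: absval_mult[OF absval] absval_power[OF absval])
  then show ?thesis using absval_of_int_coprime[OF u(2)] by simp
qed

end

text \<open>All places above \<open>p\<close> order the rationals in the same way, since \<open>|q|_v\<close> is a power of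
  \<open>|p|_v < 1\<close> with an exponent depending only on \<open>q\<close>.\<close>

lemma padic_place_of_rat_le_transfer:
  fixes v w :: "'a::field_char_0 \<Rightarrow> real"
  assumes v: "padic_place p v" and w: "padic_place p w"
    and le: "v (of_rat q) \<le> v (of_rat q')"
  shows "w (of_rat q) \<le> w (of_rat q')"
proof -
  have exponent: "\<exists>k l. \<forall>u::'a \<Rightarrow> real. padic_place p u \<longrightarrow> u (of_rat q) = u (of_nat p) ^ k / u (of_nat p) ^ l"
    if "q \<noteq> 0" for q
  proof -
    obtain a b where ab: "quotient_of q = (a, b)" by fastforce
    have q: "(of_rat q :: 'a) = of_int a / of_int b"
      using quotient_of_div[OF ab] by (simp add: of_rat_divide)
    have "a \<noteq> 0" "b \<noteq> 0" using quotient_of_div[OF ab] quotient_of_denom_pos[OF ab] that by auto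
    then show ?thesis unfolding q
      by (auto simp: padic_place.absval_of_int_eq_power absval_divide[OF padic_place.absval])
  qed
  have absval_w: "absval w" using w by (rule padic_place.absval)
  show ?thesis
  proof (cases "q = 0 \<or> q' = 0")
    case True
    have "q = 0"
    proof (rule ccontr)
      assume "q \<noteq> 0"
      then have "q' = 0" "v (of_rat q) > 0"
        using True absval_pos[OF padic_place.absval[OF v]] by auto
      then show False using le padic_place.absval[OF v] by simp
    qed
    then show ?thesis by (simp add: absval_w absval_nonneg)
  next
    case False
    then obtain k l k' l' where
      k: "\<And>u::'a \<Rightarrow> real. padic_place p u \<Longrightarrow> u (of_rat q) = u (of_nat p) ^ k / u (of_nat p) ^ l" and
      k': "\<And>u::'a \<Rightarrow> real. padic_place p u \<Longrightarrow> u (of_rat q') = u (of_nat p) ^ k' / u (of_nat p) ^ l'"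
      using exponent by meson
    have le_iff: "u (of_rat q) \<le> u (of_rat q') \<longleftrightarrow> k' + l \<le> k + l'" if u: "padic_place p u" for u :: "'a \<Rightarrow> real"
    proof -
      define x where "x = u (of_nat p)"
      have x: "0 < x" "x < 1" using padic_place.p_pos[OF u] padic_place.p_less_1[OF u] by (auto simp: x_def)
      have "u (of_rat q) \<le> u (of_rat q') \<longleftrightarrow> x ^ k / x ^ l \<le> x ^ k' / x ^ l'"
        using k[OF u] k'[OF u] by (simp add: x_def)
      also have "\<dots> \<longleftrightarrow> x ^ k * x ^ l' \<le> x ^ k' * x ^ l"
        using x by (simp add: field_simps)
      also have "\<dots> \<longleftrightarrow> k' + l \<le> k + l'" using x by (simp flip: power_add)
      finally show ?thesis .
    qed
    show ?thesis using le_iff[OF v] le_iff[OF w] le by blast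
  qed
qed

lemma finite_equiv_representatives:
  assumes bound: "\<And>V. finite V \<Longrightarrow> V \<subseteq> P \<Longrightarrow> pairwise (\<lambda>v w. \<not> equiv_absval v w) V \<Longrightarrow> card V \<le> N"
    and absval: "\<And>v. v \<in> P \<Longrightarrow> absval v"
  shows "\<exists>F. finite F \<and> F \<subseteq> P \<and> (\<forall>v\<in>P. \<exists>w\<in>F. equiv_absval w v)"
proof -
  define admissible where
    "admissible V \<longleftrightarrow> finite V \<and> V \<subseteq> P \<and> pairwise (\<lambda>v w. \<not> equiv_absval v w) V" for V
  define C where "C = card ` Collect admissible"
  have "C \<subseteq> {..N}" unfolding C_def admissible_def using bound by auto
  then have "finite C" by (rule finite_subset) simp
  moreover have "C \<noteq> {}" unfolding C_def admissible_def by (auto intro!: exI[of _ "{}"])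
  ultimately have "Max C \<in> C" by (rule Max_in)
  then obtain F where F: "admissible F" "card F = Max C" unfolding C_def by auto
  have maximal: "card V \<le> card F" if "admissible V" for V
    using that \<open>finite C\<close> unfolding F(2) C_def by (intro Max_ge) auto
  have "\<exists>w\<in>F. equiv_absval w v" if v: "v \<in> P" for v
  proof (rule ccontr)
    assume not_covered: "\<not> (\<exists>w\<in>F. equiv_absval w v)"
    then have "v \<notin> F" using equiv_absval_refl[OF absval[OF v]] by blast
    have "\<not> equiv_absval v w" if "w \<in> F" for w
      using not_covered that equiv_absval_sym[OF absval[OF v], of w] by blast
    then have "admissible (insert v F)"
      using F(1) v not_covered unfolding admissible_def pairwise_insert by blast
    then have "card (insert v F) \<le> card F" by (rule maximal)
    then show False using \<open>v \<notin> F\<close> F(1) unfolding admissible_def by simp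
  qed
  then show ?thesis using F(1) unfolding admissible_def by blast
qed

interpretation rat_vs: vector_space "\<lambda>q (x::'a::field_char_0). of_rat q * x"
  by unfold_locales (simp_all add: algebra_simps of_rat_add of_rat_mult)

lemma number_field_finite_span:
  assumes "number_field TYPE('a::field_char_0)"
  shows "\<exists>B :: 'a set. finite B \<and> rat_vs.span B = UNIV"
proof -
  obtain B :: "'a set" where B: "finite B" "\<And>x. \<exists>c. x = (\<Sum>b\<in>B. of_rat (c b) * b)"
    using assms unfolding number_field_def by blast
  have "x \<in> rat_vs.span B" for x
  proof -
    obtain c where "x = (\<Sum>b\<in>B. of_rat (c b) * b)" using B(2) by blast
    then show ?thesis by (simp add: rat_vs.span_sum rat_vs.span_scale rat_vs.span_base)
  qed
  then show ?thesis using B(1) by blast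
qed

lemma approximate_idempotents:
  assumes "finite V" and nontrivial: "\<And>v. v \<in> V \<Longrightarrow> nontrivial_absval v"
    and "pairwise (\<lambda>v w. \<not> equiv_absval v w) V" and "\<epsilon> > 0"
  obtains e where "\<And>v. v \<in> V \<Longrightarrow> v (e v - 1) < \<epsilon>"
    and "\<And>v w. v \<in> V \<Longrightarrow> w \<in> V \<Longrightarrow> w \<noteq> v \<Longrightarrow> w (e v) < \<epsilon>"
proof -
  have absval: "absval v" if "v \<in> V" for v using nontrivial[OF that] by (rule nontrivial_absvalD)
  have "\<forall>v\<in>V. \<exists>z. v z > 1 \<and> (\<forall>w\<in>V - {v}. w z < 1)"
    using absval_approximation[OF assms(1-3)] by blast
  then obtain z where z: "\<And>v. v \<in> V \<Longrightarrow> v (z v) > 1 \<and> (\<forall>w\<in>V - {v}. w (z v) < 1)"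
    by metis
  \<comment> \<open>\<open>e v = z^r / (1 + z^r)\<close> with \<open>z = z v\<close> and \<open>r\<close> large\<close>
  have "eventually (\<lambda>r. \<forall>v\<in>V. v (1 / (1 + z v ^ r)) < \<epsilon> \<and>
      (\<forall>w\<in>V - {v}. w (z v ^ r / (1 + z v ^ r)) < \<epsilon>)) sequentially"
  proof (intro eventually_ball_finite \<open>finite V\<close> ballI)
    fix v assume v: "v \<in> V"
    have "eventually (\<lambda>r. v (1 / (1 + z v ^ r)) < \<epsilon>) sequentially"
      using absval_inverse_one_plus_power_tendsto_0[OF absval[OF v]] z[OF v] \<open>\<epsilon> > 0\<close>
      by (auto dest: order_tendstoD(2))
    moreover have "eventually (\<lambda>r. w (z v ^ r / (1 + z v ^ r)) < \<epsilon>) sequentially" if "w \<in> V - {v}" for w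
      using absval_power_ratio_tendsto_0[OF absval] z[OF v] \<open>\<epsilon> > 0\<close> that
      by (auto dest: order_tendstoD(2))
    then have "eventually (\<lambda>r. \<forall>w\<in>V - {v}. w (z v ^ r / (1 + z v ^ r)) < \<epsilon>) sequentially"
      using \<open>finite V\<close> by (intro eventually_ball_finite) auto
    ultimately show "eventually (\<lambda>r. v (1 / (1 + z v ^ r)) < \<epsilon> \<and>
        (\<forall>w\<in>V - {v}. w (z v ^ r / (1 + z v ^ r)) < \<epsilon>)) sequentially"
      by (rule eventually_conj)
  qed
  from eventually_conj[OF eventually_ge_at_top[of 1] this]
  obtain r where r: "r \<ge> 1" "\<forall>v\<in>V. v (1 / (1 + z v ^ r)) < \<epsilon> \<and>
      (\<forall>w\<in>V - {v}. w (z v ^ r / (1 + z v ^ r)) < \<epsilon>)"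
    unfolding eventually_sequentially by blast
  show ?thesis
  proof (rule that[of "\<lambda>v. z v ^ r / (1 + z v ^ r)"])
    fix v assume v: "v \<in> V"
    have "z v ^ r / (1 + z v ^ r) - 1 = - (1 / (1 + z v ^ r))"
      using one_plus_power_neq_0[OF absval[OF v] conjunct1[OF z[OF v]] r(1)] by (simp add: field_simps)
    then show "v (z v ^ r / (1 + z v ^ r) - 1) < \<epsilon>" using r(2) v absval[OF v] by simp
  next
    fix v w assume "v \<in> V" "w \<in> V" "w \<noteq> v"
    then show "w (z v ^ r / (1 + z v ^ r)) < \<epsilon>" using r(2) by blast
  qed
qed

context
  fixes V :: "('a::field_char_0 \<Rightarrow> real) set" and p :: nat and e :: "('a \<Rightarrow> real) \<Rightarrow> 'a" and \<epsilon> :: real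
  assumes finite: "finite V" and padic: "\<And>v. v \<in> V \<Longrightarrow> padic_place p v"
    and \<epsilon>: "\<epsilon> > 0" "\<epsilon> * (real (card V) + 1) < 1"
    and e_near_1: "\<And>v. v \<in> V \<Longrightarrow> v (e v - 1) < \<epsilon>"
    and e_small: "\<And>v w. v \<in> V \<Longrightarrow> w \<in> V \<Longrightarrow> w \<noteq> v \<Longrightarrow> w (e v) < \<epsilon>"
begin

lemma approximate_idempotent_ge: "v \<in> V \<Longrightarrow> v (e v) \<ge> 1 - \<epsilon>"
  using absval_reverse_triangle_add[OF padic_place.absval[OF padic], of v 1 "e v - 1"] e_near_1[of v]
  by (simp add: padic_place.absval[OF padic])

text \<open>The term of a rational relation whose coefficient is largest at all places above \<open>p\<close>
  at once dominates the sum at its own place.\<close>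

lemma approximate_idempotents_rat_relation:
  assumes U: "U \<subseteq> V" and relation: "(\<Sum>v\<in>U. of_rat (q v) * e v) = 0"
  shows "\<forall>v\<in>U. q v = 0"
proof (rule ccontr)
  assume "\<not> (\<forall>v\<in>U. q v = 0)"
  then obtain v1 where v1: "v1 \<in> U" "q v1 \<noteq> 0" by blast
  have finU: "finite U" using U finite by (rule finite_subset)
  define f where "f v = v1 (of_rat (q v))" for v
  have "Max (f ` U) \<in> f ` U" using finU v1(1) by (intro Max_in) auto
  then obtain vs where vs: "vs \<in> U" "f vs = Max (f ` U)" by auto
  have f_le: "f v \<le> f vs" if "v \<in> U" for v using finU that unfolding vs(2) by simp
  have vsV: "vs \<in> V" and v1V: "v1 \<in> V" using vs(1) v1(1) U by auto
  note absval_vs = padic_place.absval[OF padic[OF vsV]]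
  define Q where "Q = vs (of_rat (q vs))"
  have q_le: "vs (of_rat (q v)) \<le> Q" if "v \<in> U" for v
    unfolding Q_def using padic_place_of_rat_le_transfer[OF padic[OF v1V] padic[OF vsV]]
      f_le[OF that] by (simp add: f_def)
  have "Q > 0"
  proof -
    have "0 < f v1" using v1 absval_pos[OF padic_place.absval[OF padic[OF v1V]]] by (simp add: f_def)
    then have "q vs \<noteq> 0" using f_le[OF v1(1)] padic_place.absval[OF padic[OF v1V]] by (auto simp: f_def)
    then show ?thesis unfolding Q_def by (simp add: absval_pos[OF absval_vs])
  qed
  have "Q * (1 - \<epsilon>) \<le> vs (of_rat (q vs) * e vs)"
    unfolding absval_mult[OF absval_vs] Q_def[symmetric]
    using approximate_idempotent_ge[OF vsV] \<open>Q > 0\<close> by (intro mult_left_mono) auto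
  also have "of_rat (q vs) * e vs = - (\<Sum>v\<in>U - {vs}. of_rat (q v) * e v)"
    using relation sum.remove[OF finU vs(1), of "\<lambda>v. of_rat (q v) * e v"] by (simp add: eq_neg_iff_add_eq_0)
  also have "vs \<dots> \<le> (\<Sum>v\<in>U - {vs}. vs (of_rat (q v)) * vs (e v))"
    using absval_sum_le[OF absval_vs, of "\<lambda>v. of_rat (q v) * e v" "U - {vs}"]
    by (simp add: absval_vs absval_mult[OF absval_vs])
  also have "\<dots> \<le> (\<Sum>v\<in>U - {vs}. Q * \<epsilon>)"
  proof (rule sum_mono)
    fix v assume v: "v \<in> U - {vs}"
    then have "vs (e v) < \<epsilon>" using e_small[of v vs] U vsV by auto
    then show "vs (of_rat (q v)) * vs (e v) \<le> Q * \<epsilon>"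
      using q_le[of v] v absval_nonneg[OF absval_vs] \<open>Q > 0\<close> by (intro mult_mono) auto
  qed
  also have "\<dots> \<le> real (card V) * (Q * \<epsilon>)"
    using card_mono[OF finite, of "U - {vs}"] U \<open>Q > 0\<close> \<epsilon>(1) by (auto intro!: mult_right_mono)
  finally have "Q * 1 \<le> Q * (\<epsilon> * (real (card V) + 1))" by (simp add: algebra_simps)
  then show False using \<open>Q > 0\<close> \<epsilon>(2) by simp
qed

lemma approximate_idempotents_inj_on: "inj_on e V"
proof (rule inj_onI, rule ccontr)
  fix v w assume vw: "v \<in> V" "w \<in> V" "e v = e w" "v \<noteq> w"
  have "card V \<ge> 1" using vw(1) finite by (simp add: Suc_le_eq card_gt_0_iff, blast)
  then have "\<epsilon> * 2 \<le> \<epsilon> * (real (card V) + 1)" using \<epsilon>(1) by (intro mult_left_mono) auto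
  then have "\<epsilon> < 1 / 2" using \<epsilon>(2) by linarith
  then show False using e_small[of w v] approximate_idempotent_ge[of v] vw by auto
qed

lemma approximate_idempotents_independent: "rat_vs.independent (e ` V)"
proof
  assume "rat_vs.dependent (e ` V)"
  then obtain T u where T: "finite T" "T \<subseteq> e ` V" "(\<Sum>x\<in>T. of_rat (u x) * x) = 0" "\<exists>x\<in>T. u x \<noteq> 0"
    unfolding rat_vs.dependent_explicit by auto
  define U where "U = {v\<in>V. e v \<in> T}"
  have U: "U \<subseteq> V" "T = e ` U" using T(2) unfolding U_def by auto
  have inj: "inj_on e U" using approximate_idempotents_inj_on U(1) by (rule inj_on_subset)
  have "(\<Sum>v\<in>U. of_rat (u (e v)) * e v) = 0" using T(3) unfolding U(2) sum.reindex[OF inj] by simp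
  then have "\<forall>v\<in>U. u (e v) = 0" by (rule approximate_idempotents_rat_relation[OF U(1)])
  then show False using T(4) U(2) by auto
qed

end

lemma card_padic_places_le:
  fixes B :: "'a::field_char_0 set" and V :: "('a \<Rightarrow> real) set"
  assumes B: "finite B" "rat_vs.span B = UNIV" and "finite V"
    and V: "\<And>v. v \<in> V \<Longrightarrow> nontrivial_absval v \<and> padic_place p v"
    and inequiv: "pairwise (\<lambda>v w. \<not> equiv_absval v w) V"
  shows "card V \<le> card B"
proof -
  define \<epsilon> where "\<epsilon> = 1 / (2 * (real (card V) + 1))"
  have \<epsilon>: "\<epsilon> > 0" "\<epsilon> * (real (card V) + 1) < 1" unfolding \<epsilon>_def by (auto simp: field_simps)
  obtain e where near_1: "\<And>v. v \<in> V \<Longrightarrow> v (e v - 1) < \<epsilon>"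
    and small: "\<And>v w. v \<in> V \<Longrightarrow> w \<in> V \<Longrightarrow> w \<noteq> v \<Longrightarrow> w (e v) < \<epsilon>"
    using approximate_idempotents[OF \<open>finite V\<close> _ inequiv \<epsilon>(1)] V by blast
  have "\<And>v. v \<in> V \<Longrightarrow> padic_place p v" using V by blast
  note e = \<open>finite V\<close> this \<epsilon> near_1 small
  have "rat_vs.independent (e ` V)"
    by (rule approximate_idempotents_independent[of V p \<epsilon> e]) (fact e)+
  then have "card (e ` V) \<le> card B" using rat_vs.independent_span_bound[OF B(1)] B(2) by auto
  moreover have "inj_on e V"
    by (rule approximate_idempotents_inj_on[of V p \<epsilon> e]) (fact e)+
  ultimately show ?thesis by (simp add: card_image)
qed

lemma padic_places_finite_representatives:
  assumes "number_field TYPE('a::field_char_0)"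
  shows "\<exists>F :: ('a \<Rightarrow> real) set. finite F \<and> F \<subseteq> {v. nontrivial_absval v \<and> padic_place p v} \<and>
    (\<forall>v. nontrivial_absval v \<and> padic_place p v \<longrightarrow> (\<exists>w\<in>F. equiv_absval w v))"
proof -
  obtain B :: "'a set" where B: "finite B" "rat_vs.span B = UNIV"
    using number_field_finite_span[OF assms] by blast
  let ?P = "{v :: 'a \<Rightarrow> real. nontrivial_absval v \<and> padic_place p v}"
  have "card V \<le> card B"
    if V: "finite V" "V \<subseteq> ?P" "pairwise (\<lambda>v w. \<not> equiv_absval v w) V" for V
  proof (rule card_padic_places_le[OF B V(1) _ V(3)])
    show "nontrivial_absval v \<and> padic_place p v" if "v \<in> V" for v using that V(2) by blast
  qed
  moreover have "absval v" if "v \<in> ?P" for v using that by (simp add: nontrivial_absvalD)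
  ultimately have "\<exists>F. finite F \<and> F \<subseteq> ?P \<and> (\<forall>v\<in>?P. \<exists>w\<in>F. equiv_absval w v)"
    by (rule finite_equiv_representatives)
  then show ?thesis by simp
qed

section \<open>Poles of an element of a number field\<close>

lemma absval_of_nat_less_1_prime_factor:
  assumes v: "absval v" and ultra: "\<not> archimedean_absval v"
  shows "n \<ge> 1 \<Longrightarrow> v (of_nat n) < 1 \<Longrightarrow> \<exists>p. prime p \<and> p dvd n \<and> v (of_nat p) < 1"
proof (induction n rule: less_induct)
  case (less n)
  have "n \<noteq> 1" using less.prems v by auto
  then obtain p m where p: "prime p" and n: "n = p * m" using prime_factor_nat by (metis dvdE)
  show ?case
  proof (cases "v (of_nat p) < 1")
    case False
    then have "v (of_nat p) = 1" using absval_of_nat_le_1[OF v ultra, of p] by simp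
    then have "v (of_nat m) < 1" using less.prems n by (simp add: absval_mult[OF v])
    moreover have "m \<ge> 1" "m < n" using less.prems n prime_gt_1_nat[OF p] by (auto simp: Suc_le_eq)
    ultimately show ?thesis using less.IH n by (meson dvd_mult)
  qed (use p n in auto)
qed

lemma monic_relation_of_nontrivial_relation:
  fixes y :: "'a::field_char_0"
  assumes relation: "(\<Sum>k\<le>N. of_rat (c k) * y ^ k) = 0" and "k0 \<le> N" "c k0 \<noteq> 0"
  shows "\<exists>D r. y ^ D = (\<Sum>k<D. of_rat (r k) * y ^ k)"
proof -
  define D where "D = Max {k. k \<le> N \<and> c k \<noteq> 0}"
  have "D \<in> {k. k \<le> N \<and> c k \<noteq> 0}" unfolding D_def using assms(2,3) by (intro Max_in) auto
  then have D: "D \<le> N" "c D \<noteq> 0" by auto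
  have above_D: "c k = 0" if "D < k" "k \<le> N" for k
    using that Max_ge[of "{k. k \<le> N \<and> c k \<noteq> 0}" k] unfolding D_def by fastforce
  have "(\<Sum>k\<le>D. of_rat (c k) * y ^ k) = 0"
    using relation D(1) by (subst (asm) sum.mono_neutral_right[of "{..N}" "{..D}"]) (auto simp: above_D)
  then have "of_rat (c D) * y ^ D + (\<Sum>k<D. of_rat (c k) * y ^ k) = 0"
    by (simp add: lessThan_Suc_atMost[symmetric] add.commute)
  then have "y ^ D = (\<Sum>k<D. of_rat (- c k / c D) * y ^ k)"
    using D(2) by (simp add: of_rat_divide of_rat_minus sum_divide_distrib[symmetric] field_simps
        eq_neg_iff_add_eq_0 sum_negf)
  then show ?thesis by (intro exI[of _ D] exI[of _ "\<lambda>k. - c k / c D"])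
qed

lemma number_field_monic_rational_relation:
  assumes "number_field TYPE('a::field_char_0)"
  shows "\<exists>D r. (y::'a) ^ D = (\<Sum>k<D. of_rat (r k) * y ^ k)"
proof -
  obtain B :: "'a set" where B: "finite B" "rat_vs.span B = UNIV"
    using number_field_finite_span[OF assms] by blast
  define N where "N = card B"
  show ?thesis
  proof (cases "inj_on (\<lambda>k. y ^ k) {..N}")
    case False
    then obtain i j where "i < j" "y ^ j = y ^ i" unfolding inj_on_def by (metis linorder_neqE_nat)
    moreover have "(\<Sum>k<j. of_rat (if k = i then 1 else 0) * y ^ k) = (\<Sum>k<j. if k = i then y ^ k else 0)"
      by (intro sum.cong) auto
    ultimately show ?thesis by (intro exI[of _ j] exI[of _ "\<lambda>k. if k = i then 1 else 0"]) simp
  next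
    case True
    have "rat_vs.dependent ((\<lambda>k. y ^ k) ` {..N})"
      using rat_vs.independent_span_bound[OF B(1)] B(2) card_image[OF True] by (fastforce simp: N_def)
    then obtain T u where T: "finite T" "T \<subseteq> (\<lambda>k. y ^ k) ` {..N}"
      "(\<Sum>x\<in>T. of_rat (u x) * x) = 0" "\<exists>x\<in>T. u x \<noteq> 0"
      unfolding rat_vs.dependent_explicit by auto
    define K where "K = {k\<in>{..N}. y ^ k \<in> T}"
    have TK: "T = (\<lambda>k. y ^ k) ` K" using T(2) unfolding K_def by auto
    have inj: "inj_on (\<lambda>k. y ^ k) K" using True by (rule inj_on_subset) (auto simp: K_def)
    define c where "c k = (if k \<in> K then u (y ^ k) else 0)" for k
    have "(\<Sum>k\<le>N. of_rat (c k) * y ^ k) = (\<Sum>k\<in>K. of_rat (u (y ^ k)) * y ^ k)"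
      unfolding c_def by (rule sum.mono_neutral_cong_right) (auto simp: K_def)
    also have "\<dots> = 0" using T(3) unfolding TK sum.reindex[OF inj] by simp
    finally have "(\<Sum>k\<le>N. of_rat (c k) * y ^ k) = 0" .
    moreover obtain x where x: "x \<in> T" "u x \<noteq> 0" using T(4) by blast
    then obtain k0 where "k0 \<in> K" "x = y ^ k0" using TK by blast
    then have "k0 \<le> N" "c k0 \<noteq> 0" using x by (auto simp: K_def c_def)
    ultimately show ?thesis by (rule monic_relation_of_nontrivial_relation)
  qed
qed

lemma ultrametric_monic_relation_coefficient_gt_1:
  assumes v: "absval v" and ultra: "\<not> archimedean_absval v"
    and relation: "y ^ D = (\<Sum>k<D. of_rat (r k) * y ^ k)" and y: "v y > 1"
  shows "\<exists>k<D. v (of_rat (r k)) > 1"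
proof (rule ccontr)
  assume "\<not> (\<exists>k<D. v (of_rat (r k)) > 1)"
  then have coefficient_le_1: "\<And>k. k < D \<Longrightarrow> v (of_rat (r k)) \<le> 1" by auto
  have "v (of_rat (r k) * y ^ k) < v y ^ D" if "k < D" for k
  proof -
    have "v (of_rat (r k) * y ^ k) \<le> v y ^ k"
      using coefficient_le_1[OF that] y
      by (simp add: absval_mult[OF v] absval_power[OF v] mult_left_le_one_le absval_nonneg[OF v])
    also have "\<dots> < v y ^ D" using that y by (rule power_strict_increasing)
    finally show ?thesis .
  qed
  then have "v (\<Sum>k<D. of_rat (r k) * y ^ k) < v y ^ D"
    using y by (intro absval_ultrametric_sum_less[OF v ultra]) auto
  then show False unfolding relation[symmetric] by (simp add: absval_power[OF v])
qed

lemma absval_of_rat_gt_1_prime_denominator: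
  assumes v: "absval v" and ultra: "\<not> archimedean_absval v" and q: "v (of_rat q) > 1"
  shows "\<exists>p. prime p \<and> p dvd nat (snd (quotient_of q)) \<and> v (of_nat p) < 1"
proof -
  obtain a b where ab: "quotient_of q = (a, b)" by fastforce
  have b: "b > 0" using quotient_of_denom_pos[OF ab] .
  have "v (of_int a) / v (of_int b) > 1"
    using q quotient_of_div[OF ab] by (simp add: of_rat_divide absval_divide[OF v])
  then have "v (of_int b) < 1"
    using absval_of_int_le_1[OF v ultra, of a] absval_pos[OF v, of "of_int b"] b
    by (simp add: field_simps)
  then have "v (of_nat (nat b)) < 1" using b by simp
  then show ?thesis
    using absval_of_nat_less_1_prime_factor[OF v ultra, of "nat b"] b ab by (simp add: Suc_le_eq)
qed

lemma finite_places_absval_gt_1: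
  fixes y :: "'a::field_char_0"
  assumes nf: "number_field TYPE('a)"
  shows "\<exists>F. finite F \<and> (\<forall>w\<in>F. nontrivial_absval w) \<and>
    (\<forall>v. nontrivial_absval v \<and> \<not> archimedean_absval v \<and> v y > 1 \<longrightarrow> (\<exists>w\<in>F. equiv_absval w v))"
proof -
  obtain D r where relation: "y ^ D = (\<Sum>k<D. of_rat (r k) * y ^ k)"
    using number_field_monic_rational_relation[OF nf] by blast
  define primes where "primes = (\<Union>k<D. {p. prime p \<and> p dvd nat (snd (quotient_of (r k)))})"
  have "finite primes"
    unfolding primes_def using quotient_of_denom_pos' by (auto intro!: finite_divisors_nat)
  have "\<forall>p. \<exists>F :: ('a \<Rightarrow> real) set. finite F \<and> F \<subseteq> {v. nontrivial_absval v \<and> padic_place p v} \<and>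
    (\<forall>v. nontrivial_absval v \<and> padic_place p v \<longrightarrow> (\<exists>w\<in>F. equiv_absval w v))"
    using padic_places_finite_representatives[OF nf] by blast
  then obtain F :: "nat \<Rightarrow> ('a \<Rightarrow> real) set" where F: "\<And>p. finite (F p)" "\<And>p. F p \<subseteq> {v. nontrivial_absval v \<and> padic_place p v}"
    "\<And>p v. nontrivial_absval v \<Longrightarrow> padic_place p v \<Longrightarrow> \<exists>w\<in>F p. equiv_absval w v"
    by metis
  have "\<exists>w\<in>(\<Union>p\<in>primes. F p). equiv_absval w v"
    if v: "nontrivial_absval v" "\<not> archimedean_absval v" "v y > 1" for v
  proof -
    have absval_v: "absval v" using v(1) by (rule nontrivial_absvalD)
    obtain k where "k < D" "v (of_rat (r k)) > 1"
      using ultrametric_monic_relation_coefficient_gt_1[OF absval_v v(2) relation v(3)] by blast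
    then obtain p where "p \<in> primes" "prime p" "v (of_nat p) < 1"
      using absval_of_rat_gt_1_prime_denominator[OF absval_v v(2)] unfolding primes_def by blast
    then have "padic_place p v" using absval_v v(2) by (simp add: padic_place_def)
    then show ?thesis using F(3)[OF v(1)] \<open>p \<in> primes\<close> by blast
  qed
  moreover have "finite (\<Union>p\<in>primes. F p)" using \<open>finite primes\<close> F(1) by blast
  moreover have "\<forall>w\<in>(\<Union>p\<in>primes. F p). nontrivial_absval w" using F(2) by blast
  ultimately show ?thesis by blast
qed

lemma S_integral_coeffs_fps_inv:
  fixes a :: "'a::field_char_0 fps"
  assumes nf: "number_field TYPE('a)" and "S_integral_coeffs a"
    and a0: "a $ 0 = 0" and a1: "a $ 1 \<noteq> 0"
  shows "S_integral_coeffs (fps_inv a)"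
proof -
  obtain S where S: "finite S" "\<forall>w\<in>S. nontrivial_absval w"
    "\<forall>v. nontrivial_absval v \<and> archimedean_absval v \<longrightarrow> (\<exists>w\<in>S. equiv_absval w v)"
    "\<forall>v. nontrivial_absval v \<and> \<not> (\<exists>w\<in>S. equiv_absval w v) \<longrightarrow> (\<forall>n. v (a $ n) \<le> 1)"
    using assms(2) unfolding S_integral_coeffs_def by blast
  obtain F where F: "finite F" "\<forall>w\<in>F. nontrivial_absval w"
    "\<forall>v. nontrivial_absval v \<and> \<not> archimedean_absval v \<and> v (1 / a $ 1) > 1 \<longrightarrow> (\<exists>w\<in>F. equiv_absval w v)"
    using finite_places_absval_gt_1[OF nf, of "1 / a $ 1"] by blast
  have integral: "v (fps_inv a $ n) \<le> 1"
    if v: "nontrivial_absval v" "\<not> (\<exists>w\<in>S \<union> F. equiv_absval w v)" for v n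
  proof (rule fps_inv_nth_le_1[OF nontrivial_absvalD[OF v(1)] _ a0 a1])
    show ultra: "\<not> archimedean_absval v" using S(3) v by blast
    show "v (a $ k) \<le> 1" for k using S(4) v by blast
    show "v (1 / a $ 1) \<le> 1"
    proof (rule ccontr)
      assume "\<not> v (1 / a $ 1) \<le> 1"
      then obtain w where "w \<in> F" "equiv_absval w v" using F(3) v(1) ultra by auto
      then show False using v(2) by blast
    qed
  qed
  show ?thesis unfolding S_integral_coeffs_def
  proof (intro exI[of _ "S \<union> F"] conjI)
    show "finite (S \<union> F)" using S(1) F(1) by simp
    show "\<forall>w\<in>S \<union> F. nontrivial_absval w" using S(2) F(2) by blast
    show "\<forall>v. nontrivial_absval v \<and> archimedean_absval v \<longrightarrow> (\<exists>w\<in>S \<union> F. equiv_absval w v)"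
      using S(3) by blast
    show "\<forall>v. nontrivial_absval v \<and> \<not> (\<exists>w\<in>S \<union> F. equiv_absval w v) \<longrightarrow> (\<forall>n. v (fps_inv a $ n) \<le> 1)"
      using integral by blast
  qed
qed

theorem lemma3p1:
  fixes \<alpha> :: "'a::field_char_0 fps"
  assumes "number_field TYPE('a)"
    and "adelic \<alpha>"
    and "fps_nth \<alpha> 0 = 0"
    and "fps_nth \<alpha> 1 \<noteq> 0"
  shows "\<exists>\<beta>. adelic \<beta> \<and> \<beta> oo \<alpha> = fps_X"
proof (intro exI conjI)
  have "S_integral_coeffs \<alpha>" and radius: "\<And>v. nontrivial_absval v \<Longrightarrow> fps_radius_at v \<alpha> > 0"
    using assms(2) unfolding adelic_def by auto
  then show "adelic (fps_inv \<alpha>)"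
    unfolding adelic_def using assms(1,3,4)
    by (auto intro: S_integral_coeffs_fps_inv fps_radius_at_fps_inv_pos nontrivial_absvalD)
  show "fps_inv \<alpha> oo \<alpha> = fps_X"
    using assms(3,4) by (rule fps_inv)
qed

end
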